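(* Let $p\geq1$, let $\varrho:\mathscr{P}(\mathbb{R})\to\mathbb{R}$ be a functional and let $\mathscr{M}\subset\mathscr{P}_p(\mathbb{R})$. For $N\in\mathbb{N}$ and $\boldsymbol\xi=(\xi^1,\dots,\xi^N)\in\mathbb{R}^N$ let $P_N^{\boldsymbol\xi}=\frac1N\sum_{i=1}^N\delta_{\xi^i}$ denote the empirical distribution, and define $\widehat\varrho_N:\mathbb{R}^N\to\mathbb{R}$ by $\widehat\varrho_N(\boldsymbol\xi)=\varrho(P_N^{\boldsymbol\xi})$. Fix $N\in\mathbb{N}$ and assume there is a constant $L>0$ such that $$|\varrho(P_N^{\boldsymbol\xi})-\varrho(P_N^{\widehat{\boldsymbol\xi}})|\leq\frac LN\sum_{k=1}^N c_p(\xi^k,\widehat\xi^k)|\xi^k-\widehat\xi^k|\quad\text{for all }\boldsymbol\xi,\widehat{\boldsymbol\xi}\in\mathbb{R}^N.$$ Then $$\mathsf{d}_K\big(P^{\otimes N}\circ\widehat\varrho_N^{-1},\,Q^{\otimes N}\circ\widehat\varrho_N^{-1}\big)\leq L\,\mathsf{d}_{FM,p}(P,Q)<+\infty\quad\text{for all }P,Q\in\mathscr{M}.$$ If the assumption holds (with the same $L$) for all $N\in\mathbb{N}$, then this inequality holds for all $N\in\mathbb{N}$. In particular, when $p=1$, $\mathsf{d}_K\big(P^{\otimes N}\circ\widehat\varrho_N^{-1},Q^{\otimes N}\circ\widehat\varrho_N^{-1}\big)\leq L\,\mathsf{d}_K(P,Q)<+\infty$ for all $P,Q\in\mathscr{M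}$.
   Context: $\mathscr{P}(\mathbb{R})$ is the set of Borel probability measures on $\mathbb{R}$. For $p\geq1$, $c_p(\xi,\tilde\xi)=\max\{1,|\xi|,|\tilde\xi|\}^{p-1}$; $\mathcal{F}_p(\mathbb{R})$ is the set of $\psi:\mathbb{R}\to\mathbb{R}$ with $|\psi(\xi)-\psi(\tilde\xi)|\leq c_p(\xi,\tilde\xi)|\xi-\tilde\xi|$ for all $\xi,\tilde\xi$; the Fortet–Mourier metric is $\mathsf{d}_{FM,p}(P,Q)=\sup_{\psi\in\mathcal{F}_p(\mathbb{R})}|\int\psi\,dP-\int\psi\,dQ|$, and the Kantorovich metric is $\mathsf{d}_K=\mathsf{d}_{FM,1}$ (supremum over $1$-Lipschitz functions). $\mathscr{P}_p(\mathbb{R})=\{P\in\mathscr{P}(\mathbb{R}):\mathsf{d}_{FM,p}(P,\delta_0)<+\infty\}$, with $\delta_0$ the Dirac measure at $0$. $P^{\otimes N}$ is the $N$-fold product measure on $\mathbb{R}^N$ and $P^{\otimes N}\circ\widehat\varrho_N^{-1}$ is the law of $\widehat\varrho_N(\xi^1,\dots,\xi^N)$ when $\xi^1,\dots,\xi^N$ are i.i.d. with law $P$. *)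

theory Defs
  imports "HOL-Probability.Probability"
begin

definition c_p :: "real \<Rightarrow> real \<Rightarrow> real \<Rightarrow> real" where
  "c_p p x y = (max 1 (max \<bar>x\<bar> \<bar>y\<bar>)) powr (p - 1)"

definition FM_class :: "real \<Rightarrow> (real \<Rightarrow> real) set" where
  "FM_class p = {\<psi>. \<forall>x y. \<bar>\<psi> x - \<psi> y\<bar> \<le> c_p p x y * \<bar>x - y\<bar>}"

definition d_FM :: "real \<Rightarrow> real measure \<Rightarrow> real measure \<Rightarrow> ereal" where
  "d_FM p P Q = (SUP \<psi>\<in>FM_class p. ereal \<bar>(\<integral>x. \<psi> x \<partial>P) - (\<integral>x. \<psi> x \<partial>Q)\<bar>)"

definition d_K :: "real measure \<Rightarrow> real measure \<Rightarrow> ereal" where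
  "d_K = d_FM 1"

definition ProbR :: "real measure set" where
  "ProbR = {P. prob_space P \<and> sets P = sets borel}"

definition Prob_p :: "real \<Rightarrow> real measure set" where
  "Prob_p p = {P \<in> ProbR. d_FM p P (return borel 0) < \<infinity>}"

text \<open>Empirical distribution (1/N) sum_{i<N} delta_(xi i) of the first N coordinates.\<close>
definition empirical :: "nat \<Rightarrow> (nat \<Rightarrow> real) \<Rightarrow> real measure" where
  "empirical N \<xi> = distr (uniform_count_measure {..<N}) borel \<xi>"

definition rho_hat :: "(real measure \<Rightarrow> real) \<Rightarrow> nat \<Rightarrow> (nat \<Rightarrow> real) \<Rightarrow> real" where
  "rho_hat \<rho> N \<xi> = \<rho> (empirical N \<xi>)"

definition law_rho_hat :: "(real measure \<Rightarrow> real) \<Rightarrow> nat \<Rightarrow> real measure \<Rightarrow> real measure" where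
  "law_rho_hat \<rho> N P = distr (PiM {..<N} (\<lambda>_. P)) borel (rho_hat \<rho> N)"

end

theory Submission
  imports Defs
begin

text \<open>
  Interpolate between the product measures P^N and Q^N through the hybrids whose first j
  coordinates are drawn from Q and the remaining ones from P. Consecutive hybrids differ in a
  single coordinate, so by Fubini the change of the expectation of psi o rho_N between them is an
  average, over the other coordinates, of differences int f dP - int f dQ, where f, the dependence
  on the swapped coordinate, is L/N times a member of F_p by the Lipschitz hypothesis on rho.
  Each swap thus costs at most (L/N) d_FM,p(P,Q), and the N swaps add up to L d_FM,p(P,Q) for
  every 1-Lipschitz psi.

  Finiteness of d_FM,p on P_p comes from the triangle inequality through delta_0. Testing against
  the truncations of max(1,|x|)^p/p, a member of F_p, shows that the measures in P_p have finite
  p-th moments, which makes psi o rho_N integrable under every hybrid.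
\<close>

lemma c_p_pos: "0 < c_p p x y"
  unfolding c_p_def by simp

lemma c_p_commute: "c_p p x y = c_p p y x"
  unfolding c_p_def by (simp add: max.commute)

lemma c_p_1 [simp]: "c_p 1 x y = 1"
  unfolding c_p_def by simp

lemma zero_in_FM_class: "(\<lambda>_. 0) \<in> FM_class p"
  unfolding FM_class_def using c_p_pos by (simp add: less_imp_le)

lemma FM_class_min_const:
  assumes "f \<in> FM_class p"
  shows "(\<lambda>x. min (f x) c) \<in> FM_class p"
proof -
  have "\<bar>min a c - min b c\<bar> \<le> \<bar>a - b\<bar>" for a b :: real
    by (simp add: min_def abs_if)
  then show ?thesis
    using assms unfolding FM_class_def by (blast intro: order_trans)
qed

lemma FM_class_lipschitz_on_ball:
  assumes "p \<ge> 1" "\<psi> \<in> FM_class p" "R \<ge> 1"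
  shows "(R powr (p - 1))-lipschitz_on (ball 0 R) \<psi>"
proof (rule lipschitz_onI)
  fix x y :: real assume "x \<in> ball 0 R" "y \<in> ball 0 R"
  then have "c_p p x y \<le> R powr (p - 1)"
    unfolding c_p_def using assms(1,3) by (intro powr_mono2) auto
  then have "c_p p x y * \<bar>x - y\<bar> \<le> R powr (p - 1) * \<bar>x - y\<bar>"
    by (rule mult_right_mono) simp
  then show "dist (\<psi> x) (\<psi> y) \<le> R powr (p - 1) * dist x y"
    using assms(2) unfolding FM_class_def dist_real_def by (blast intro: order_trans)
qed simp

lemma continuous_on_FM_class:
  assumes "p \<ge> 1" "\<psi> \<in> FM_class p"
  shows "continuous_on UNIV \<psi>"
proof (intro continuous_at_imp_continuous_on ballI)
  fix x :: real
  have "continuous_on (ball 0 (\<bar>x\<bar> + 1)) \<psi>"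
    using FM_class_lipschitz_on_ball[OF assms, of "\<bar>x\<bar> + 1"] by (auto intro: lipschitz_on_continuous_on)
  then show "isCont \<psi> x"
    by (rule continuous_on_interior) auto
qed

lemma FM_class_measurable:
  assumes "p \<ge> 1" "\<psi> \<in> FM_class p" "sets M = sets borel"
  shows "\<psi> \<in> borel_measurable M"
  using borel_measurable_continuous_onI[OF continuous_on_FM_class[OF assms(1,2)]]
    measurable_cong_sets[OF assms(3) refl] by blast

lemma abs_integral_diff_le_d_FM:
  "\<psi> \<in> FM_class p \<Longrightarrow> ereal \<bar>(\<integral>x. \<psi> x \<partial>P) - (\<integral>x. \<psi> x \<partial>Q)\<bar> \<le> d_FM p P Q"
  unfolding d_FM_def by (rule SUP_upper)

lemma d_FM_nonneg: "0 \<le> d_FM p P Q"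
  using abs_integral_diff_le_d_FM[OF zero_in_FM_class[of p], of P Q] by (simp add: zero_ereal_def)

lemma abs_integral_diff_le_scaled_d_FM:
  fixes f :: "real \<Rightarrow> real"
  assumes "c > 0" "(\<lambda>x. f x / c) \<in> FM_class p" "d_FM p P Q \<le> ereal D"
  shows "\<bar>(\<integral>x. f x \<partial>P) - (\<integral>x. f x \<partial>Q)\<bar> \<le> c * D"
proof -
  have "\<bar>(\<integral>x. f x \<partial>P) / c - (\<integral>x. f x \<partial>Q) / c\<bar> \<le> D"
    using order_trans[OF abs_integral_diff_le_d_FM[OF assms(2)] assms(3)] by simp
  then show ?thesis
    using assms(1) by (simp add: diff_divide_distrib[symmetric] divide_le_eq mult.commute)
qed

lemma Prob_pD:
  assumes "P \<in> Prob_p p"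
  shows "prob_space P" "sets P = sets borel" "d_FM p P (return borel 0) < \<infinity>"
  using assms unfolding Prob_p_def ProbR_def by auto

lemma Prob_p_integral_FM_class_bounded:
  assumes "p \<ge> 1" "P \<in> Prob_p p"
  obtains B where "\<And>\<psi>. \<psi> \<in> FM_class p \<Longrightarrow> \<bar>(\<integral>x. \<psi> x \<partial>P) - \<psi> 0\<bar> \<le> B"
proof -
  obtain B where B: "d_FM p P (return borel 0) = ereal B"
    using Prob_pD(3)[OF assms(2)] d_FM_nonneg by (cases "d_FM p P (return borel 0)") auto
  show ?thesis
  proof (rule that)
    fix \<psi> assume \<psi>: "\<psi> \<in> FM_class p"
    have "(\<integral>x. \<psi> x \<partial>return borel 0) = \<psi> 0"
      using FM_class_measurable[OF assms(1) \<psi>] by (intro integral_return) auto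
    then show "\<bar>(\<integral>x. \<psi> x \<partial>P) - \<psi> 0\<bar> \<le> B"
      using abs_integral_diff_le_d_FM[OF \<psi>, of P "return borel 0"] B by simp
  qed
qed

lemma d_FM_Prob_p_finite:
  assumes "p \<ge> 1" "P \<in> Prob_p p" "Q \<in> Prob_p p"
  shows "d_FM p P Q < \<infinity>"
proof -
  obtain B1 where B1: "\<And>\<psi>. \<psi> \<in> FM_class p \<Longrightarrow> \<bar>(\<integral>x. \<psi> x \<partial>P) - \<psi> 0\<bar> \<le> B1"
    using Prob_p_integral_FM_class_bounded[OF assms(1,2)] by blast
  obtain B2 where B2: "\<And>\<psi>. \<psi> \<in> FM_class p \<Longrightarrow> \<bar>(\<integral>x. \<psi> x \<partial>Q) - \<psi> 0\<bar> \<le> B2"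
    using Prob_p_integral_FM_class_bounded[OF assms(1,3)] by blast
  have "d_FM p P Q \<le> ereal (B1 + B2)"
    unfolding d_FM_def
  proof (rule SUP_least)
    fix \<psi> assume \<psi>: "\<psi> \<in> FM_class p"
    show "ereal \<bar>(\<integral>x. \<psi> x \<partial>P) - (\<integral>x. \<psi> x \<partial>Q)\<bar> \<le> ereal (B1 + B2)"
      using B1[OF \<psi>] B2[OF \<psi>] by simp
  qed
  then show ?thesis
    using le_less_trans by fastforce
qed

lemma powr_diff_le_mult_powr:
  fixes s t p :: real
  assumes "0 < s" "s \<le> t" "p \<ge> 1"
  shows "t powr p - s powr p \<le> p * t powr (p - 1) * (t - s)"
proof (cases "s = t")
  case False
  then have "s < t" using assms by simp
  moreover have "\<And>x. s \<le> x \<Longrightarrow> x \<le> t \<Longrightarrow> DERIV (\<lambda>x. x powr p) x :> p * x powr (p - 1)"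
    using assms by (auto intro!: has_real_derivative_powr)
  ultimately have "\<exists>z>s. z < t \<and> t powr p - s powr p = (t - s) * (p * z powr (p - 1))"
    by (rule MVT2)
  then obtain z where z: "s < z" "z < t" "t powr p - s powr p = (t - s) * (p * z powr (p - 1))"
    by blast
  have "z powr (p - 1) \<le> t powr (p - 1)"
    using z assms by (intro powr_mono2) auto
  then have "(t - s) * (p * z powr (p - 1)) \<le> (t - s) * (p * t powr (p - 1))"
    using z assms by (intro mult_left_mono) auto
  then show ?thesis using z(3) by (simp add: algebra_simps)
qed simp

lemma FM_class_max_1_powr:
  assumes p: "p \<ge> 1"
  shows "(\<lambda>x. max 1 \<bar>x\<bar> powr p / p) \<in> FM_class p"
proof -
  define v where "v x = max 1 \<bar>x\<bar> powr p / p" for x :: real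
  have bound: "\<bar>v x - v y\<bar> \<le> c_p p x y * \<bar>x - y\<bar>" if le: "max 1 \<bar>y\<bar> \<le> max 1 \<bar>x\<bar>" for x y
  proof -
    let ?t = "max 1 \<bar>x\<bar>" and ?s = "max 1 \<bar>y\<bar>"
    have "v y \<le> v x"
      unfolding v_def using le p by (intro divide_right_mono powr_mono2) auto
    moreover have "v x - v y \<le> ?t powr (p - 1) * (?t - ?s)"
      using powr_diff_le_mult_powr[of ?s ?t p] le p
      by (simp add: v_def diff_divide_distrib[symmetric] divide_le_eq mult_ac)
    moreover have "?t powr (p - 1) * (?t - ?s) \<le> c_p p x y * \<bar>x - y\<bar>"
      unfolding c_p_def using p le by (intro mult_mono powr_mono2) auto
    ultimately show ?thesis by simp
  qed
  have "\<bar>v x - v y\<bar> \<le> c_p p x y * \<bar>x - y\<bar>" for x y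
  proof (cases "max 1 \<bar>y\<bar> \<le> max 1 \<bar>x\<bar>")
    case False
    then have "max 1 \<bar>x\<bar> \<le> max 1 \<bar>y\<bar>" by linarith
    from bound[OF this] show ?thesis by (simp add: c_p_commute abs_minus_commute)
  qed (rule bound)
  then have "v \<in> FM_class p"
    unfolding FM_class_def by blast
  then show ?thesis
    unfolding v_def[abs_def] .
qed

lemma integrable_nonneg_truncations_bounded:
  fixes v :: "'a \<Rightarrow> real"
  assumes v_nonneg: "\<And>x. 0 \<le> v x"
    and trunc_integrable: "\<And>n::nat. integrable M (\<lambda>x. min (v x) n)"
    and trunc_integral_le: "\<And>n::nat. (\<integral>x. min (v x) n \<partial>M) \<le> B"
    and v_measurable: "v \<in> borel_measurable M"
  shows "integrable M v"
proof -
  have "(\<integral>\<^sup>+x. ennreal (v x) \<partial>M) = (\<integral>\<^sup>+x. (SUP n::nat. ennreal (min (v x) n)) \<partial>M)"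
  proof (intro nn_integral_cong antisym)
    fix x
    obtain n :: nat where "v x \<le> real n"
      using real_arch_simple by blast
    then show "ennreal (v x) \<le> (SUP n::nat. ennreal (min (v x) n))"
      by (intro SUP_upper2[where i=n]) auto
    show "(SUP n::nat. ennreal (min (v x) n)) \<le> ennreal (v x)"
      by (rule SUP_least) (auto intro!: ennreal_leI)
  qed
  also have "\<dots> = (SUP n::nat. \<integral>\<^sup>+x. ennreal (min (v x) n) \<partial>M)"
  proof (rule nn_integral_monotone_convergence_SUP)
    show "incseq (\<lambda>(n::nat) x. ennreal (min (v x) n))"
      by (auto simp: incseq_def le_fun_def intro!: ennreal_leI)
    show "(\<lambda>x. ennreal (min (v x) n)) \<in> borel_measurable M" for n :: nat
      by (rule measurable_compose[OF borel_measurable_integrable[OF trunc_integrable] measurable_ennreal])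
  qed
  also have "\<dots> \<le> ennreal B"
  proof (rule SUP_least)
    fix n :: nat
    have "(\<integral>\<^sup>+x. ennreal (min (v x) n) \<partial>M) = ennreal (\<integral>x. min (v x) n \<partial>M)"
      using v_nonneg by (intro nn_integral_eq_integral trunc_integrable) auto
    then show "(\<integral>\<^sup>+x. ennreal (min (v x) n) \<partial>M) \<le> ennreal B"
      using trunc_integral_le by (simp add: ennreal_leI)
  qed
  finally have "(\<integral>\<^sup>+x. ennreal (norm (v x)) \<partial>M) < \<infinity>"
    using v_nonneg by (simp add: le_less_trans)
  then show ?thesis
    using v_measurable by (intro integrableI_bounded)
qed

lemma Prob_p_integrable_max_1_powr:
  assumes p: "p \<ge> 1" and P: "P \<in> Prob_p p"
  shows "integrable P (\<lambda>x. max 1 \<bar>x\<bar> powr p)"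
proof -
  interpret prob_space P
    using Prob_pD(1)[OF P] .
  obtain B where B: "\<And>\<psi>. \<psi> \<in> FM_class p \<Longrightarrow> \<bar>(\<integral>x. \<psi> x \<partial>P) - \<psi> 0\<bar> \<le> B"
    using Prob_p_integral_FM_class_bounded[OF p P] by blast
  define v where "v x = max 1 \<bar>x\<bar> powr p / p" for x :: real
  have v_FM: "v \<in> FM_class p"
    unfolding v_def using FM_class_max_1_powr[OF p] .
  have v_trunc_FM: "(\<lambda>x. min (v x) (real n)) \<in> FM_class p" for n :: nat
    using FM_class_min_const[OF v_FM] .
  have v_nonneg: "0 \<le> v x" for x
    unfolding v_def using p by simp
  have "integrable P v"
  proof (rule integrable_nonneg_truncations_bounded)
    show "integrable P (\<lambda>x. min (v x) (real n))" for n :: nat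
      using FM_class_measurable[OF p v_trunc_FM Prob_pD(2)[OF P]]
      by (rule integrable_const_bound[where B="real n", rotated]) (simp add: v_nonneg)
    show "(\<integral>x. min (v x) (real n) \<partial>P) \<le> B + 1" for n :: nat
    proof -
      have "min (v 0) (real n) \<le> 1"
        using p by (simp add: v_def min.coboundedI1)
      then show ?thesis
        using B[OF v_trunc_FM, of n] by linarith
    qed
  qed (use v_nonneg FM_class_measurable[OF p v_FM Prob_pD(2)[OF P]] in auto)
  then have "integrable P (\<lambda>x. p * v x)"
    by (rule integrable_mult_right)
  then show ?thesis
    using p by (simp add: v_def)
qed

lemma Prob_p_integrable_c_p_weight:
  assumes p: "p \<ge> 1" and P: "P \<in> Prob_p p"
  shows "integrable P (\<lambda>x. c_p p x 0 * \<bar>x\<bar>)"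
proof (rule Bochner_Integration.integrable_bound[OF Prob_p_integrable_max_1_powr[OF p P]])
  have "continuous_on UNIV (\<lambda>x::real. c_p p x 0 * \<bar>x\<bar>)"
    unfolding c_p_def by (intro continuous_intros) auto
  then show "(\<lambda>x. c_p p x 0 * \<bar>x\<bar>) \<in> borel_measurable P"
    using borel_measurable_continuous_onI measurable_cong_sets[OF Prob_pD(2)[OF P] refl] by blast
  have "norm (c_p p x 0 * \<bar>x\<bar>) \<le> norm (max 1 \<bar>x\<bar> powr p)" for x :: real
  proof -
    have c_p_x_0: "c_p p x 0 = max 1 \<bar>x\<bar> powr (p - 1)"
      unfolding c_p_def by simp
    have "c_p p x 0 * \<bar>x\<bar> \<le> max 1 \<bar>x\<bar> powr (p - 1) * max 1 \<bar>x\<bar>"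
      unfolding c_p_x_0 by (intro mult_left_mono) auto
    also have "\<dots> = max 1 \<bar>x\<bar> powr p"
      using powr_mult_base[of "max 1 \<bar>x\<bar>" "p - 1"] by (simp add: mult.commute)
    finally show ?thesis
      using c_p_pos[of p x 0] by simp
  qed
  then show "AE x in P. norm (c_p p x 0 * \<bar>x\<bar>) \<le> norm (max 1 \<bar>x\<bar> powr p)"
    by simp
qed

definition c_p_lipschitz :: "real \<Rightarrow> real \<Rightarrow> nat \<Rightarrow> ((nat \<Rightarrow> real) \<Rightarrow> real) \<Rightarrow> bool" where
  "c_p_lipschitz p C N g \<longleftrightarrow>
     (\<forall>\<xi> \<xi>'. \<bar>g \<xi> - g \<xi>'\<bar> \<le> C * (\<Sum>k<N. c_p p (\<xi> k) (\<xi>' k) * \<bar>\<xi> k - \<xi>' k\<bar>))"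

lemma c_p_lipschitz_comp:
  assumes "c_p_lipschitz p C N g" "\<psi> \<in> FM_class 1"
  shows "c_p_lipschitz p C N (\<lambda>\<xi>. \<psi> (g \<xi>))"
  using assms unfolding c_p_lipschitz_def FM_class_def by simp (metis order_trans)

lemma c_p_lipschitz_cong:
  assumes "c_p_lipschitz p C N g" "\<And>k. k < N \<Longrightarrow> \<xi> k = \<xi>' k"
  shows "g \<xi> = g \<xi>'"
proof -
  have "(\<Sum>k<N. c_p p (\<xi> k) (\<xi>' k) * \<bar>\<xi> k - \<xi>' k\<bar>) = 0"
    using assms(2) by (intro sum.neutral) simp
  then show ?thesis
    using assms(1)[unfolded c_p_lipschitz_def, rule_format, of \<xi> \<xi>'] by simp
qed

lemma c_p_lipschitz_continuous:
  assumes "c_p_lipschitz p C N g"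
  shows "continuous_on UNIV g"
proof (intro continuous_at_imp_continuous_on ballI)
  fix \<xi>\<^sub>0 :: "nat \<Rightarrow> real"
  define bound where "bound \<xi> = C * (\<Sum>k<N. c_p p (\<xi> k) (\<xi>\<^sub>0 k) * \<bar>\<xi> k - \<xi>\<^sub>0 k\<bar>)" for \<xi>
  have "continuous_on UNIV bound"
    unfolding bound_def c_p_def
    by (intro continuous_intros continuous_on_product_then_coordinatewise[OF continuous_on_id]) auto
  then have "(bound \<longlongrightarrow> bound \<xi>\<^sub>0) (at \<xi>\<^sub>0)"
    by (simp add: continuous_on_eq_continuous_at isCont_def)
  then have bound_lim: "(bound \<longlongrightarrow> 0) (at \<xi>\<^sub>0)"
    by (rule tendsto_eq_rhs) (simp add: bound_def)
  have "\<forall>\<xi>. norm (g \<xi> - g \<xi>\<^sub>0) \<le> bound \<xi>"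
    using assms unfolding c_p_lipschitz_def bound_def real_norm_def by blast
  then have "((\<lambda>\<xi>. g \<xi> - g \<xi>\<^sub>0) \<longlongrightarrow> 0) (at \<xi>\<^sub>0)"
    using bound_lim by (rule Lim_null_comparison[OF always_eventually])
  then show "isCont g \<xi>\<^sub>0"
    unfolding isCont_def by (rule LIM_zero_cancel)
qed

lemma c_p_lipschitz_measurable:
  assumes g: "c_p_lipschitz p C N g" and sets_M: "\<And>i. i < N \<Longrightarrow> sets (M i) = sets borel"
  shows "g \<in> borel_measurable (PiM {..<N} M)"
proof -
  \<comment> \<open>Only the first \<open>N\<close> coordinates matter, so \<open>g\<close> factors through the extension by zero.\<close>
  define extend where "extend \<xi> i = (if i < N then \<xi> i else 0)" for \<xi> :: "nat \<Rightarrow> real" and i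
  have extend_measurable: "extend \<in> measurable (PiM {..<N} (\<lambda>_. borel)) (PiM UNIV (\<lambda>_. borel))"
    unfolding extend_def
  proof (rule measurable_PiM_single')
    fix i :: nat
    show "(\<lambda>\<xi>. if i < N then \<xi> i else 0) \<in> borel_measurable (PiM {..<N} (\<lambda>_. borel))"
      by (cases "i < N") (auto intro: measurable_component_singleton)
  qed (auto simp: space_PiM)
  have g_measurable: "g \<in> borel_measurable (PiM UNIV (\<lambda>_::nat. borel :: real measure))"
    using borel_measurable_continuous_onI[OF c_p_lipschitz_continuous[OF g]]
      measurable_cong_sets[OF sets_PiM_equal_borel refl] by blast
  have g_extend: "(\<lambda>\<xi>. g (extend \<xi>)) = g"
    by (rule ext, rule c_p_lipschitz_cong[OF g]) (simp add: extend_def)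
  have "sets (PiM {..<N} M) = sets (PiM {..<N} (\<lambda>_. borel))"
    using sets_M by (intro sets_PiM_cong) auto
  then have "measurable (PiM {..<N} M) borel = measurable (PiM {..<N} (\<lambda>_. borel)) borel"
    by (rule measurable_cong_sets) (rule refl)
  then show ?thesis
    using measurable_compose[OF extend_measurable g_measurable] unfolding g_extend by blast
qed

lemma c_p_lipschitz_fun_upd_FM_class:
  assumes "c_p_lipschitz p C N g" "C > 0" "j < N"
  shows "(\<lambda>y. g (X(j := y)) / C) \<in> FM_class p"
  unfolding FM_class_def
proof (intro CollectI allI)
  fix y y' :: real
  have "(\<Sum>k<N. c_p p ((X(j := y)) k) ((X(j := y')) k) * \<bar>(X(j := y)) k - (X(j := y')) k\<bar>)
      = (\<Sum>k<N. if k = j then c_p p y y' * \<bar>y - y'\<bar> else 0)"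
    by (rule sum.cong) auto
  also have "\<dots> = c_p p y y' * \<bar>y - y'\<bar>"
    using \<open>j < N\<close> by simp
  finally have sum_eq: "(\<Sum>k<N. c_p p ((X(j := y)) k) ((X(j := y')) k) * \<bar>(X(j := y)) k - (X(j := y')) k\<bar>)
      = c_p p y y' * \<bar>y - y'\<bar>" .
  have "\<bar>g (X(j := y)) - g (X(j := y'))\<bar> \<le> C * (c_p p y y' * \<bar>y - y'\<bar>)"
    using assms(1)[unfolded c_p_lipschitz_def, rule_format, of "X(j := y)" "X(j := y')"]
    unfolding sum_eq .
  then show "\<bar>g (X(j := y)) / C - g (X(j := y')) / C\<bar> \<le> c_p p y y' * \<bar>y - y'\<bar>"
    using \<open>C > 0\<close> by (simp add: diff_divide_distrib[symmetric] divide_le_eq mult.commute)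
qed

lemma c_p_lipschitz_integrable:
  assumes p: "p \<ge> 1" and "C \<ge> 0" and g: "c_p_lipschitz p C N g"
    and M: "\<And>i. i < N \<Longrightarrow> M i \<in> Prob_p p"
  shows "integrable (PiM {..<N} M) g"
proof -
  interpret PiM: prob_space "PiM {..<N} M"
    using Prob_pD(1)[OF M] by (intro prob_space_PiM) auto
  have weight: "integrable (PiM {..<N} M) (\<lambda>\<xi>. c_p p (\<xi> k) 0 * \<bar>\<xi> k\<bar>)" if "k < N" for k
  proof -
    have "distr (PiM {..<N} M) (M k) (\<lambda>\<xi>. \<xi> k) = M k"
      using that Prob_pD(1)[OF M] by (intro distr_PiM_component) auto
    then have "integrable (distr (PiM {..<N} M) (M k) (\<lambda>\<xi>. \<xi> k)) (\<lambda>x. c_p p x 0 * \<bar>x\<bar>)"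
      using Prob_p_integrable_c_p_weight[OF p M[OF that]] by simp
    then show ?thesis
      by (rule integrable_distr[rotated]) (use that in \<open>auto intro: measurable_component_singleton\<close>)
  qed
  have "integrable (PiM {..<N} M) (\<lambda>\<xi>. \<Sum>k<N. c_p p (\<xi> k) 0 * \<bar>\<xi> k\<bar>)"
    by (rule Bochner_Integration.integrable_sum) (use weight in simp)
  then have majorant_integrable: "integrable (PiM {..<N} M)
      (\<lambda>\<xi>. \<bar>g (\<lambda>_. 0)\<bar> + C * (\<Sum>k<N. c_p p (\<xi> k) 0 * \<bar>\<xi> k\<bar>))"
    by (intro Bochner_Integration.integrable_add PiM.integrable_const integrable_mult_right)
  have "AE \<xi> in PiM {..<N} M.
      norm (g \<xi>) \<le> norm (\<bar>g (\<lambda>_. 0)\<bar> + C * (\<Sum>k<N. c_p p (\<xi> k) 0 * \<bar>\<xi> k\<bar>))"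
  proof (rule AE_I2)
    fix \<xi> :: "nat \<Rightarrow> real"
    have "\<bar>g \<xi> - g (\<lambda>_. 0)\<bar> \<le> C * (\<Sum>k<N. c_p p (\<xi> k) 0 * \<bar>\<xi> k\<bar>)"
      using g[unfolded c_p_lipschitz_def, rule_format, of \<xi> "\<lambda>_. 0"] by simp
    moreover have "0 \<le> C * (\<Sum>k<N. c_p p (\<xi> k) 0 * \<bar>\<xi> k\<bar>)"
      using \<open>C \<ge> 0\<close> by (intro mult_nonneg_nonneg sum_nonneg) (auto intro: less_imp_le[OF c_p_pos])
    ultimately show "norm (g \<xi>) \<le> norm (\<bar>g (\<lambda>_. 0)\<bar> + C * (\<Sum>k<N. c_p p (\<xi> k) 0 * \<bar>\<xi> k\<bar>))"
      by simp
  qed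
  moreover have "g \<in> borel_measurable (PiM {..<N} M)"
    using Prob_pD(2)[OF M] by (rule c_p_lipschitz_measurable[OF g])
  ultimately show ?thesis
    using majorant_integrable by (blast intro: Bochner_Integration.integrable_bound)
qed

lemma integral_PiM_insert_fun_upd:
  fixes f :: "(nat \<Rightarrow> real) \<Rightarrow> real"
  assumes "finite I" "k \<notin> I" and M: "\<And>i. i \<in> I \<Longrightarrow> prob_space (M i)" and Z: "prob_space Z"
    and f: "integrable (PiM (insert k I) (M(k := Z))) f"
  shows "integral\<^sup>L (PiM (insert k I) (M(k := Z))) f = (\<integral>X. (\<integral>y. f (X(k := y)) \<partial>Z) \<partial>PiM I M)"
    and "integrable (PiM I M) (\<lambda>X. \<integral>y. f (X(k := y)) \<partial>Z)"
proof -
  interpret Z: prob_space Z by fact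
  interpret PiM: prob_space "PiM I M" using M by (intro prob_space_PiM) auto
  interpret pair_sigma_finite Z "PiM I M" ..
  have PiM_I: "PiM I (M(k := Z)) = PiM I M"
    using \<open>k \<notin> I\<close> by (intro PiM_cong) auto
  let ?upd = "\<lambda>(y, X). X(k := y)"
  have "(\<lambda>x. (snd x)(k := fst x)) \<in> measurable (Z \<Otimes>\<^sub>M PiM I (M(k := Z))) (PiM (insert k I) (M(k := Z)))"
    by (rule measurable_fun_upd[where J=I]) auto
  then have upd_measurable: "?upd \<in> measurable (Z \<Otimes>\<^sub>M PiM I M) (PiM (insert k I) (M(k := Z)))"
    by (simp add: PiM_I split_beta')
  have "distr ((M(k := Z)) k \<Otimes>\<^sub>M PiM I (M(k := Z))) (PiM (insert k I) (M(k := Z))) ?upd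
      = PiM (insert k I) (M(k := Z))"
    using M Z \<open>k \<notin> I\<close> by (intro distr_pair_PiM_eq_PiM) auto
  then have distr_upd: "distr (Z \<Otimes>\<^sub>M PiM I M) (PiM (insert k I) (M(k := Z))) ?upd = PiM (insert k I) (M(k := Z))"
    by (simp only: PiM_I fun_upd_same)
  have "integrable (Z \<Otimes>\<^sub>M PiM I M) (\<lambda>(y, X). f (X(k := y)))"
    using integrable_distr[OF upd_measurable, of f] f distr_upd by (simp add: split_beta')
  then show "integral\<^sup>L (PiM (insert k I) (M(k := Z))) f = (\<integral>X. (\<integral>y. f (X(k := y)) \<partial>Z) \<partial>PiM I M)"
    and "integrable (PiM I M) (\<lambda>X. \<integral>y. f (X(k := y)) \<partial>Z)"
    using integral_distr[OF upd_measurable borel_measurable_integrable[OF f]] distr_upd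
      integral_snd[of "\<lambda>y X. f (X(k := y))"] integrable_snd[of "\<lambda>y X. f (X(k := y))"]
    by (simp_all add: split_beta')
qed

lemma abs_integral_PiM_fun_upd_diff_le:
  fixes f :: "(nat \<Rightarrow> real) \<Rightarrow> real"
  assumes I: "finite I" "k \<notin> I" and M: "\<And>i. i \<in> I \<Longrightarrow> prob_space (M i)"
    and A: "prob_space A" and B: "prob_space B"
    and f_A: "integrable (PiM (insert k I) (M(k := A))) f"
    and f_B: "integrable (PiM (insert k I) (M(k := B))) f"
    and "c > 0" and f_FM: "\<And>X. (\<lambda>y. f (X(k := y)) / c) \<in> FM_class p"
    and "d_FM p A B \<le> ereal D"
  shows "\<bar>integral\<^sup>L (PiM (insert k I) (M(k := A))) f - integral\<^sup>L (PiM (insert k I) (M(k := B))) f\<bar> \<le> c * D"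
proof -
  interpret PiM: prob_space "PiM I M" using M by (intro prob_space_PiM) auto
  note A_slice = integral_PiM_insert_fun_upd[OF I M A f_A]
  note B_slice = integral_PiM_insert_fun_upd[OF I M B f_B]
  define slice_diff where "slice_diff X = (\<integral>y. f (X(k := y)) \<partial>A) - (\<integral>y. f (X(k := y)) \<partial>B)" for X
  have "integral\<^sup>L (PiM (insert k I) (M(k := A))) f - integral\<^sup>L (PiM (insert k I) (M(k := B))) f
      = (\<integral>X. slice_diff X \<partial>PiM I M)"
    using A_slice B_slice unfolding slice_diff_def by (simp add: Bochner_Integration.integral_diff)
  also have "\<bar>\<dots>\<bar> \<le> (\<integral>X. \<bar>slice_diff X\<bar> \<partial>PiM I M)"
    by (rule integral_abs_bound)
  also have "\<dots> \<le> (\<integral>X. c * D \<partial>PiM I M)"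
    using A_slice(2) B_slice(2) abs_integral_diff_le_scaled_d_FM[OF \<open>c > 0\<close> f_FM \<open>d_FM p A B \<le> ereal D\<close>]
    unfolding slice_diff_def by (intro integral_mono) auto
  finally show ?thesis
    by (simp add: PiM.prob_space)
qed

lemma abs_integral_PiM_power_diff_le:
  fixes g :: "(nat \<Rightarrow> real) \<Rightarrow> real"
  assumes p: "p \<ge> 1" and "C > 0" and g: "c_p_lipschitz p C N g"
    and P: "P \<in> Prob_p p" and Q: "Q \<in> Prob_p p" and D: "d_FM p P Q \<le> ereal D"
  shows "\<bar>(\<integral>\<xi>. g \<xi> \<partial>PiM {..<N} (\<lambda>_. P)) - (\<integral>\<xi>. g \<xi> \<partial>PiM {..<N} (\<lambda>_. Q))\<bar> \<le> N * C * D"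
proof -
  define hybrid where "hybrid j i = (if i < j then Q else P)" for j i :: nat
  define H where "H j = (\<integral>\<xi>. g \<xi> \<partial>PiM {..<N} (hybrid j))" for j
  have hybrid_Prob_p: "hybrid j i \<in> Prob_p p" for j i
    using P Q by (simp add: hybrid_def)
  have H_step: "\<bar>H j - H (Suc j)\<bar> \<le> C * D" if "j < N" for j
  proof -
    have "insert j ({..<N} - {j}) = {..<N}"
      using that by auto
    moreover have "(hybrid j)(j := P) = hybrid j" "(hybrid j)(j := Q) = hybrid (Suc j)"
      by (auto simp: hybrid_def)
    moreover have "integrable (PiM {..<N} (hybrid j')) g" for j'
      using c_p_lipschitz_integrable[OF p _ g] \<open>C > 0\<close> hybrid_Prob_p by simp
    ultimately show ?thesis
      using abs_integral_PiM_fun_upd_diff_le[of "{..<N} - {j}" j "hybrid j" P Q g C p D]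
        Prob_pD(1)[OF hybrid_Prob_p] Prob_pD(1)[OF P] Prob_pD(1)[OF Q] \<open>C > 0\<close> D
        c_p_lipschitz_fun_upd_FM_class[OF g \<open>C > 0\<close> that]
      unfolding H_def by simp
  qed
  have "H 0 = (\<integral>\<xi>. g \<xi> \<partial>PiM {..<N} (\<lambda>_. P))"
    by (simp add: H_def hybrid_def[abs_def])
  moreover have "PiM {..<N} (hybrid N) = PiM {..<N} (\<lambda>_. Q)"
    by (auto simp: hybrid_def intro!: PiM_cong)
  then have "H N = (\<integral>\<xi>. g \<xi> \<partial>PiM {..<N} (\<lambda>_. Q))"
    by (simp add: H_def)
  ultimately have "\<bar>(\<integral>\<xi>. g \<xi> \<partial>PiM {..<N} (\<lambda>_. P)) - (\<integral>\<xi>. g \<xi> \<partial>PiM {..<N} (\<lambda>_. Q))\<bar>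
      = \<bar>\<Sum>j<N. H j - H (Suc j)\<bar>"
    by (simp only: sum_lessThan_telescope')
  also have "\<dots> \<le> (\<Sum>j<N. C * D)"
    using H_step by (intro order_trans[OF sum_abs sum_mono]) auto
  also have "\<dots> = N * C * D"
    by simp
  finally show ?thesis .
qed

lemma integral_law_rho_hat:
  fixes \<psi> :: "real \<Rightarrow> real"
  assumes "c_p_lipschitz p C N (rho_hat \<rho> N)" "sets P = sets borel" "\<psi> \<in> borel_measurable borel"
  shows "(\<integral>x. \<psi> x \<partial>law_rho_hat \<rho> N P) = (\<integral>\<xi>. \<psi> (rho_hat \<rho> N \<xi>) \<partial>PiM {..<N} (\<lambda>_. P))"
proof -
  have "rho_hat \<rho> N \<in> borel_measurable (PiM {..<N} (\<lambda>_. P))"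
    using assms(2) by (intro c_p_lipschitz_measurable[OF assms(1)]) simp
  then show ?thesis
    unfolding law_rho_hat_def by (rule integral_distr[OF _ assms(3)])
qed

theorem theorem2:
  fixes p L :: real and \<rho> :: "real measure \<Rightarrow> real" and \<M> :: "real measure set" and N :: nat
  assumes "p \<ge> 1"
    and "\<M> \<subseteq> Prob_p p"
    and "N \<ge> 1"
    and "L > 0"
    and "\<forall>\<xi> \<xi>' :: nat \<Rightarrow> real.
           \<bar>\<rho> (empirical N \<xi>) - \<rho> (empirical N \<xi>')\<bar>
             \<le> L / real N * (\<Sum>k<N. c_p p (\<xi> k) (\<xi>' k) * \<bar>\<xi> k - \<xi>' k\<bar>)"
  shows "\<forall>P\<in>\<M>. \<forall>Q\<in>\<M>.
           d_K (law_rho_hat \<rho> N P) (law_rho_hat \<rho> N Q) \<le> ereal L * d_FM p P Q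
           \<and> ereal L * d_FM p P Q < \<infinity>"
proof (intro ballI)
  fix P Q assume "P \<in> \<M>" "Q \<in> \<M>"
  then have P: "P \<in> Prob_p p" and Q: "Q \<in> Prob_p p"
    using assms(2) by auto
  have lip: "c_p_lipschitz p (L / N) N (rho_hat \<rho> N)"
    using assms(5) unfolding c_p_lipschitz_def rho_hat_def by blast
  obtain D where D: "d_FM p P Q = ereal D"
    using d_FM_Prob_p_finite[OF assms(1) P Q] d_FM_nonneg by (cases "d_FM p P Q") auto
  have "\<bar>(\<integral>x. \<psi> x \<partial>law_rho_hat \<rho> N P) - (\<integral>x. \<psi> x \<partial>law_rho_hat \<rho> N Q)\<bar> \<le> L * D"
    if \<psi>: "\<psi> \<in> FM_class 1" for \<psi>
  proof -
    have "\<psi> \<in> borel_measurable borel"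
      using FM_class_measurable[OF _ \<psi>] by simp
    then have "\<bar>(\<integral>x. \<psi> x \<partial>law_rho_hat \<rho> N P) - (\<integral>x. \<psi> x \<partial>law_rho_hat \<rho> N Q)\<bar>
        = \<bar>(\<integral>\<xi>. \<psi> (rho_hat \<rho> N \<xi>) \<partial>PiM {..<N} (\<lambda>_. P)) - (\<integral>\<xi>. \<psi> (rho_hat \<rho> N \<xi>) \<partial>PiM {..<N} (\<lambda>_. Q))\<bar>"
      by (simp only: integral_law_rho_hat[OF lip Prob_pD(2)[OF P]] integral_law_rho_hat[OF lip Prob_pD(2)[OF Q]])
    also have "\<dots> \<le> N * (L / N) * D"
      using assms(3,4) D
      by (intro abs_integral_PiM_power_diff_le[OF assms(1) _ c_p_lipschitz_comp[OF lip \<psi>] P Q]) auto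
    also have "\<dots> = L * D"
      using assms(3) by simp
    finally show ?thesis .
  qed
  then have "d_K (law_rho_hat \<rho> N P) (law_rho_hat \<rho> N Q) \<le> ereal (L * D)"
    unfolding d_K_def d_FM_def by (intro SUP_least) simp
  then show "d_K (law_rho_hat \<rho> N P) (law_rho_hat \<rho> N Q) \<le> ereal L * d_FM p P Q
      \<and> ereal L * d_FM p P Q < \<infinity>"
    by (simp add: D)
qed

end
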